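(* Let $\mathbf{A}$ be a 5-dimensional LV algebra with natural basis $e_1,\dots,e_5$ such that $e_4e_j=\frac12(e_4+e_j)$ for $j=1,2,3,5$, and $e_ie_j\neq\frac12(e_i+e_j)$ for all distinct $i,j\in\{1,2,3,5\}$. Then $\mathrm{Der}(\mathbf{A})=\{0\}$.
   Context: Let $\mathbb{F}$ be a field of characteristic different from $2$. A Lotka–Volterra (LV) algebra of dimension $5$ over $\mathbb{F}$ is a commutative (not necessarily associative) $\mathbb{F}$-algebra $\mathbf{A}$ with a basis $e_1,\dots,e_5$ (the natural basis) such that $e_ie_j=\alpha_{ij}e_i+\alpha_{ji}e_j$ with $\alpha_{ij}\in\mathbb{F}$, $\alpha_{ii}=\frac12$ and $\alpha_{ij}+\alpha_{ji}=1$ for all $i,j$. A derivation is a linear map $D:\mathbf{A}\to\mathbf{A}$ with $D(uv)=D(u)v+uD(v)$ for all $u,v$; $\mathrm{Der}(\mathbf{A})$ is the set of derivations. *)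

theory Defs
  imports "HOL-Analysis.Finite_Cartesian_Product"
begin

datatype idx5 = I1 | I2 | I3 | I4 | I5

lemma UNIV_idx5: "(UNIV :: idx5 set) = {I1, I2, I3, I4, I5}"
  using idx5.exhaust by auto

instance idx5 :: finite
  by standard (simp add: UNIV_idx5)

text \<open>Elements of the algebra are coordinate vectors 'a^idx5 w.r.t. the natural basis;
  the basis vector e_i is axis i 1.  The product is the bilinear extension of
  e_i e_j = alpha i j e_i + alpha j i e_j.\<close>
definition lv_mult :: "(idx5 \<Rightarrow> idx5 \<Rightarrow> 'a::field) \<Rightarrow> 'a^idx5 \<Rightarrow> 'a^idx5 \<Rightarrow> 'a^idx5" where
  "lv_mult \<alpha> u v = (\<chi> k. \<Sum>j\<in>UNIV. \<alpha> k j * (u$k * v$j + u$j * v$k))"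

definition is_LV :: "(idx5 \<Rightarrow> idx5 \<Rightarrow> 'a::field) \<Rightarrow> bool" where
  "is_LV \<alpha> \<longleftrightarrow> (\<forall>i. \<alpha> i i = 1/2) \<and> (\<forall>i j. \<alpha> i j + \<alpha> j i = 1)"

definition is_derivation :: "(idx5 \<Rightarrow> idx5 \<Rightarrow> 'a::field) \<Rightarrow> ('a^idx5 \<Rightarrow> 'a^idx5) \<Rightarrow> bool" where
  "is_derivation \<alpha> D \<longleftrightarrow>
     (\<forall>u v. D (u + v) = D u + D v) \<and> (\<forall>c u. D (c *s u) = c *s D u) \<and>
     (\<forall>u v. D (lv_mult \<alpha> u v) = lv_mult \<alpha> (D u) v + lv_mult \<alpha> u (D v))"

end

theory Submission
  imports Defs
begin

text \<open>Apply a derivation D to e_i e_j = \<alpha>_ij e_i + \<alpha>_ji e_j (which holds for i = j too) and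
  compare coordinates.  Since e_i is idempotent, the k-th coordinate of D e_i vanishes whenever
  \<alpha>_ki \<noteq> 1/2; so for j \<noteq> 4 the vector D e_j is supported on {j, 4}.  The j-th and i-th
  coordinates of the Leibniz rule for e_j e_j and e_i e_j (i \<notin> {j, 4}) then give two
  independent linear equations for these two coordinates, so D e_j = 0.  Knowing this, the
  Leibniz rule for e_i e_4 kills the coordinates of D e_4 off 4, and the one for e_4 e_4 the last
  one.\<close>

lemma lv_mult_axis_nth:
  "lv_mult \<alpha> (axis i 1) w $ k =
     (if k = i then (\<Sum>l\<in>UNIV. \<alpha> i l * w$l) + \<alpha> i i * w$i else \<alpha> k i * w$k)"
  by (simp add: lv_mult_def axis_def sum.distrib distrib_left
      if_distrib[of "\<lambda>x. x * _"] if_distrib[of "(*) _"] cong: if_cong)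

lemma sum_mult_axis_nth: "(\<Sum>l\<in>UNIV. f l * axis j 1 $ l) = (f j :: 'a::semiring_1)"
  by (simp add: axis_def if_distrib[of "(*) _"] cong: if_cong)

lemma lv_mult_axis_axis:
  "lv_mult \<alpha> (axis i 1) (axis j 1) = \<alpha> i j *s axis i 1 + \<alpha> j i *s axis j 1"
  by (auto simp: vec_eq_iff lv_mult_axis_nth sum_mult_axis_nth) (auto simp: axis_def)

lemma lv_mult_commute: "lv_mult \<alpha> u v = lv_mult \<alpha> v u"
  unfolding lv_mult_def by (simp add: vec_eq_iff algebra_simps)

lemma lv_mult_zero_left [simp]: "lv_mult \<alpha> 0 v = 0"
  unfolding lv_mult_def by (simp add: vec_eq_iff)

lemma lv_mult_zero_right [simp]: "lv_mult \<alpha> v 0 = 0"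
  unfolding lv_mult_def by (simp add: vec_eq_iff)

lemma is_LV_half_swap:
  fixes \<alpha> :: "idx5 \<Rightarrow> idx5 \<Rightarrow> 'a::field"
  assumes "(2::'a) \<noteq> 0" and "is_LV \<alpha>"
  shows "\<alpha> j i = 1/2 \<longleftrightarrow> \<alpha> i j = 1/2"
proof -
  have "\<alpha> j i = 1 - \<alpha> i j"
    using \<open>is_LV \<alpha>\<close> unfolding is_LV_def by (metis add_diff_cancel_left')
  moreover have "(1::'a) - 1/2 = 1/2"
    using \<open>(2::'a) \<noteq> 0\<close> by (simp add: field_simps)
  ultimately show ?thesis
    by auto
qed

lemma lv_mult_axis_axis_eq_midpoint_iff:
  fixes \<alpha> :: "idx5 \<Rightarrow> idx5 \<Rightarrow> 'a::field"
  assumes "(2::'a) \<noteq> 0" and "is_LV \<alpha>" and "i \<noteq> j"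
  shows "lv_mult \<alpha> (axis i 1) (axis j 1) = (1/2) *s (axis i 1 + axis j 1) \<longleftrightarrow> \<alpha> i j = 1/2"
proof -
  have "lv_mult \<alpha> (axis i 1) (axis j 1) = (1/2) *s (axis i 1 + axis j 1)
      \<longleftrightarrow> \<alpha> i j = 1/2 \<and> \<alpha> j i = 1/2"
    using \<open>i \<noteq> j\<close> unfolding lv_mult_axis_axis vec_eq_iff
    by (auto simp: axis_def)
  with is_LV_half_swap[OF assms(1,2)] show ?thesis
    by blast
qed

lemma sum_axis_expansion: "(\<Sum>i\<in>UNIV. u $ i *s axis i 1) = (u :: 'a::semiring_1^'n)"
  by (simp add: vec_eq_iff axis_def if_distrib[of "(*) _"] cong: if_cong)

lemma derivation_zero: "is_derivation \<alpha> (\<lambda>u. 0)"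
  by (simp add: is_derivation_def)

lemma derivation_add:
  "is_derivation \<alpha> D \<Longrightarrow> D (u + v) = D u + D v"
  by (simp add: is_derivation_def)

lemma derivation_scale:
  "is_derivation \<alpha> D \<Longrightarrow> D (c *s u) = c *s D u"
  by (simp add: is_derivation_def)

lemma derivation_sum:
  assumes "is_derivation \<alpha> D" and "finite A"
  shows "D (\<Sum>i\<in>A. f i) = (\<Sum>i\<in>A. D (f i))"
  using \<open>finite A\<close>
proof (induction A rule: finite_induct)
  case empty
  have "D 0 = D 0 + D 0"
    using derivation_add[OF assms(1), of 0 0] by simp
  then show ?case
    by simp
next
  case (insert i A)
  then show ?case
    by (simp add: derivation_add[OF assms(1)])
qed

lemma derivation_eq_0_if_axis:
  assumes "is_derivation \<alpha> D" and "\<And>i. D (axis i 1) = 0"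
  shows "D = (\<lambda>u. 0)"
proof
  fix u
  have "D u = D (\<Sum>i\<in>UNIV. u $ i *s axis i 1)"
    by (simp only: sum_axis_expansion)
  also have "\<dots> = (\<Sum>i\<in>UNIV. u $ i *s D (axis i 1))"
    by (simp add: derivation_sum[OF assms(1)] derivation_scale[OF assms(1)])
  also have "\<dots> = 0"
    by (simp add: assms(2))
  finally show "D u = 0" .
qed

lemma derivation_mult:
  "is_derivation \<alpha> D \<Longrightarrow> D (lv_mult \<alpha> u v) = lv_mult \<alpha> (D u) v + lv_mult \<alpha> u (D v)"
  by (simp add: is_derivation_def)

lemma derivation_axis_product:
  assumes "is_derivation \<alpha> D"
  shows "\<alpha> i j *s D (axis i 1) + \<alpha> j i *s D (axis j 1)
    = lv_mult \<alpha> (axis j 1) (D (axis i 1)) + lv_mult \<alpha> (axis i 1) (D (axis j 1))"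
  using derivation_mult[OF assms, of "axis i 1" "axis j 1"]
  by (simp add: lv_mult_axis_axis derivation_add[OF assms] derivation_scale[OF assms]
      lv_mult_commute[of \<alpha> "D (axis i 1)"])

lemma derivation_axis_nth_off:
  assumes "is_derivation \<alpha> D" and "k \<noteq> i" and "k \<noteq> j"
  shows "\<alpha> i j * D (axis i 1) $ k + \<alpha> j i * D (axis j 1) $ k
    = \<alpha> k j * D (axis i 1) $ k + \<alpha> k i * D (axis j 1) $ k"
  using arg_cong[OF derivation_axis_product[OF assms(1)], of "\<lambda>v. v $ k"] assms(2,3)
  by (simp add: lv_mult_axis_nth)

lemma derivation_axis_weighted_sum:
  fixes \<alpha> :: "idx5 \<Rightarrow> idx5 \<Rightarrow> 'a::field"
  assumes two: "(2::'a) \<noteq> 0" and LV: "is_LV \<alpha>" and der: "is_derivation \<alpha> D"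
  shows "(\<Sum>l\<in>UNIV. \<alpha> i l * D (axis j 1) $ l) = (\<alpha> j i - 1/2) * D (axis j 1) $ i"
proof -
  define S where "S = (\<Sum>l\<in>UNIV. \<alpha> i l * D (axis j 1) $ l)"
  have half: "\<And>i. \<alpha> i i = 1/2"
    using LV by (simp add: is_LV_def)
  have eq: "\<alpha> i j * D (axis i 1) $ i + \<alpha> j i * D (axis j 1) $ i
      = lv_mult \<alpha> (axis j 1) (D (axis i 1)) $ i + S + 1/2 * D (axis j 1) $ i"
    using arg_cong[OF derivation_axis_product[OF der], of "\<lambda>v. v $ i"]
    by (simp add: lv_mult_axis_nth S_def half)
  show ?thesis
  proof (cases "i = j")
    case True
    let ?x = "D (axis i 1) $ i"
    have "1/2 * ?x + 1/2 * ?x = (S + 1/2 * ?x) + S + 1/2 * ?x"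
      using eq unfolding True lv_mult_axis_nth half if_True S_def by simp
    then have "S + S = 0"
      by (simp add: algebra_simps)
    with two have "S = 0"
      by (metis mult_2 mult_eq_0_iff)
    with True show ?thesis
      by (simp add: S_def half)
  next
    case False
    with eq show ?thesis
      by (simp add: lv_mult_axis_nth S_def algebra_simps)
  qed
qed

lemma derivation_axis_nth_eq_0:
  fixes \<alpha> :: "idx5 \<Rightarrow> idx5 \<Rightarrow> 'a::field"
  assumes two: "(2::'a) \<noteq> 0" and LV: "is_LV \<alpha>" and der: "is_derivation \<alpha> D"
    and "k \<noteq> i" and "\<alpha> k i \<noteq> 1/2"
  shows "D (axis i 1) $ k = 0"
proof -
  have "\<alpha> i i = 1/2"
    using LV by (simp add: is_LV_def)
  with two \<open>\<alpha> k i \<noteq> 1/2\<close> have "2 * \<alpha> i i \<noteq> 2 * \<alpha> k i"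
    by (auto simp: field_simps)
  moreover have "(2 * \<alpha> i i) * D (axis i 1) $ k = (2 * \<alpha> k i) * D (axis i 1) $ k"
    using derivation_axis_nth_off[OF der \<open>k \<noteq> i\<close> \<open>k \<noteq> i\<close>] by (simp add: algebra_simps)
  ultimately show ?thesis
    by (metis mult_cancel_right)
qed

lemma ex_idx5_other: "\<exists>i. i \<noteq> I4 \<and> i \<noteq> j"
  by (rule exI[of _ "if j = I1 then I2 else I1"]) auto

locale lv5_I4_midpoint_derivation =
  fixes \<alpha> :: "idx5 \<Rightarrow> idx5 \<Rightarrow> 'a::field" and D :: "'a^idx5 \<Rightarrow> 'a^idx5"
  assumes two: "(2::'a) \<noteq> 0" and LV: "is_LV \<alpha>" and der: "is_derivation \<alpha> D"
    and I4_half: "\<And>j. j \<noteq> I4 \<Longrightarrow> \<alpha> I4 j = 1/2"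
    and not_half: "\<And>i j. i \<noteq> I4 \<Longrightarrow> j \<noteq> I4 \<Longrightarrow> i \<noteq> j \<Longrightarrow> \<alpha> i j \<noteq> 1/2"
begin

lemma diag_half: "\<alpha> i i = 1/2"
  using LV by (simp add: is_LV_def)

lemma half_I4: "j \<noteq> I4 \<Longrightarrow> \<alpha> j I4 = 1/2"
  using I4_half is_LV_half_swap[OF two LV] by blast

lemma axis_nth_eq_0_off_I4:
  assumes "j \<noteq> I4" and "k \<noteq> I4" and "k \<noteq> j"
  shows "D (axis j 1) $ k = 0"
  using derivation_axis_nth_eq_0[OF two LV der \<open>k \<noteq> j\<close> not_half[OF assms(2,1,3)]] .

lemma weighted_sum_off_I4:
  assumes "j \<noteq> I4"
  shows "(\<Sum>l\<in>UNIV. \<alpha> m l * D (axis j 1) $ l) = \<alpha> m j * D (axis j 1) $ j + \<alpha> m I4 * D (axis j 1) $ I4"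
proof -
  have "(\<Sum>l\<in>UNIV. \<alpha> m l * D (axis j 1) $ l) = (\<Sum>l\<in>{j, I4}. \<alpha> m l * D (axis j 1) $ l)"
    by (rule sum.mono_neutral_right) (auto simp: axis_nth_eq_0_off_I4[OF assms])
  with assms show ?thesis
    by simp
qed

lemma axis_eq_0_off_I4:
  assumes "j \<noteq> I4"
  shows "D (axis j 1) = 0"
proof -
  obtain i where i: "i \<noteq> I4" "i \<noteq> j"
    using ex_idx5_other by blast
  let ?x = "D (axis j 1) $ j" and ?y = "D (axis j 1) $ I4"
  have "1/2 * ?x + 1/2 * ?y = 0"
    using derivation_axis_weighted_sum[OF two LV der, of j j]
    by (simp add: weighted_sum_off_I4[OF assms] diag_half half_I4[OF assms])
  then have x: "?x = - ?y"
    using two by (simp add: field_simps eq_neg_iff_add_eq_0)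
  have "\<alpha> i j * ?x + 1/2 * ?y = 0"
    using derivation_axis_weighted_sum[OF two LV der, of i j]
    by (simp add: weighted_sum_off_I4[OF assms] half_I4[OF i(1)]
        axis_nth_eq_0_off_I4[OF assms i(1,2)])
  then have "\<alpha> i j * ?y = 1/2 * ?y"
    unfolding x by (metis add.commute eq_neg_iff_add_eq_0 mult_minus_right)
  then have y: "?y = 0"
    using not_half[OF i(1) assms i(2)] by (metis mult_cancel_right)
  show ?thesis
    unfolding vec_eq_iff
    using axis_nth_eq_0_off_I4[OF assms] x y by (metis neg_0_equal_iff_equal zero_index)
qed

lemma axis_I4_eq_0: "D (axis I4 1) = 0"
proof -
  have off: "D (axis I4 1) $ k = 0" if k: "k \<noteq> I4" for k
  proof -
    obtain i where i: "i \<noteq> I4" "i \<noteq> k"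
      using ex_idx5_other by blast
    have "\<alpha> I4 i * D (axis I4 1) $ k = \<alpha> k i * D (axis I4 1) $ k"
      using derivation_axis_nth_off[OF der, of k i I4] k i
      by (simp add: axis_eq_0_off_I4[OF i(1)])
    then show ?thesis
      using I4_half[OF i(1)] not_half[OF k i(1) i(2)[symmetric]] by (metis mult_cancel_right)
  qed
  have "(\<Sum>l\<in>UNIV. \<alpha> I4 l * D (axis I4 1) $ l) = \<alpha> I4 I4 * D (axis I4 1) $ I4"
    by (rule sum.mono_neutral_right[where S = "{I4}", simplified]) (auto simp: off)
  then have "D (axis I4 1) $ I4 = 0"
    using derivation_axis_weighted_sum[OF two LV der, of I4 I4] two by (simp add: diag_half)
  with off show ?thesis
    by (metis vec_eq_iff zero_index)
qed

lemma derivation_eq_0: "D = (\<lambda>u. 0)"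
  by (rule derivation_eq_0_if_axis[OF der]) (metis axis_I4_eq_0 axis_eq_0_off_I4)

end

theorem mainTheorem16:
  fixes \<alpha> :: "idx5 \<Rightarrow> idx5 \<Rightarrow> 'a::field"
  assumes char: "(2::'a) \<noteq> 0"
    and LV: "is_LV \<alpha>"
    and e4: "\<And>j. j \<noteq> I4 \<Longrightarrow>
               lv_mult \<alpha> (axis I4 1) (axis j 1) = (1/2) *s (axis I4 1 + axis j 1)"
    and others: "\<And>i j. i \<noteq> I4 \<Longrightarrow> j \<noteq> I4 \<Longrightarrow> i \<noteq> j \<Longrightarrow>
               lv_mult \<alpha> (axis i 1) (axis j 1) \<noteq> (1/2) *s (axis i 1 + axis j 1)"
  shows "{D. is_derivation \<alpha> D} = {(\<lambda>u. 0)}"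
proof -
  note midpoint_iff = lv_mult_axis_axis_eq_midpoint_iff[OF char LV]
  have I4_half: "\<alpha> I4 j = 1/2" if "j \<noteq> I4" for j
    using e4[OF that] midpoint_iff[of I4 j] that by simp
  have not_half: "\<alpha> i j \<noteq> 1/2" if "i \<noteq> I4" "j \<noteq> I4" "i \<noteq> j" for i j
    using others[OF that] midpoint_iff[OF that(3)] by simp
  have "D = (\<lambda>u. 0)" if "is_derivation \<alpha> D" for D
    using lv5_I4_midpoint_derivation.derivation_eq_0 lv5_I4_midpoint_derivation.intro
      char LV that I4_half not_half by blast
  then show ?thesis
    using derivation_zero by blast
qed

end
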